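(* Let $n\neq 1$ be a real number, $k_n=n-1$, and $k_0,k_1,k_2\in\mathbb{R}$. On the phase space with canonical coordinates $(r,\phi,p_r,p_\phi)$, $r>0$, consider $$H_{na}'=\tfrac12 r^{2n}\Big(p_r^2+\tfrac{p_\phi^2}{r^2}\Big)+\frac{k_0}{r^{2k_n}}+\frac{1}{r^{k_n}}\big(k_1\cos(k_n\phi)+k_2\sin(k_n\phi)\big).$$ Define the real functions $$M_{n1}=r^{2k_n}\big(r^2p_r^2-p_\phi^2\big)+\frac{2k_0}{r^{2k_n}}+\frac{2}{r^{k_n}}\big(k_1\cos(k_n\phi)+k_2\sin(k_n\phi)\big),$$ $$M_{n2}=2r^{2n-1}p_rp_\phi+\frac{2}{r^{k_n}}\big(k_1\sin(k_n\phi)-k_2\cos(k_n\phi)\big),$$ and the complex functions $M_n=M_{n1}+iM_{n2}$ and $N_\phi=\cos(2k_n\phi)+i\sin(2k_n\phi)$. Then the complex function $J_{23}=M_n N_\phi^{*}$ (where ${}^*$ denotes complex conjugation), which is quadratic in the momenta, is a constant of motion of $H_{na}'$: $\{J_{23},H_{na}'\}=0$; equivalently its real and imaginary parts both Poisson commute with $H_{na}'$.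
   Context: The Poisson bracket is the canonical one in $(r,\phi,p_r,p_\phi)$, extended complex-linearly to complex-valued functions. A constant of motion of $H$ is a function $F$ with $\{F,H\}=0$. *)

theory Defs
  imports "HOL-Analysis.Analysis"
begin

type_synonym phase_fun = "real \<Rightarrow> real \<Rightarrow> real \<Rightarrow> real \<Rightarrow> complex"

definition d_r :: "phase_fun \<Rightarrow> phase_fun" where
  "d_r F r ph pr pph = vector_derivative (\<lambda>t. F t ph pr pph) (at r)"
definition d_phi :: "phase_fun \<Rightarrow> phase_fun" where
  "d_phi F r ph pr pph = vector_derivative (\<lambda>t. F r t pr pph) (at ph)"
definition d_pr :: "phase_fun \<Rightarrow> phase_fun" where
  "d_pr F r ph pr pph = vector_derivative (\<lambda>t. F r ph t pph) (at pr)"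
definition d_pphi :: "phase_fun \<Rightarrow> phase_fun" where
  "d_pphi F r ph pr pph = vector_derivative (\<lambda>t. F r ph pr t) (at pph)"

definition poisson :: "phase_fun \<Rightarrow> phase_fun \<Rightarrow> phase_fun" where
  "poisson F G r ph pr pph =
     d_r F r ph pr pph * d_pr G r ph pr pph - d_pr F r ph pr pph * d_r G r ph pr pph
   + d_phi F r ph pr pph * d_pphi G r ph pr pph - d_pphi F r ph pr pph * d_phi G r ph pr pph"

definition H_na :: "real \<Rightarrow> real \<Rightarrow> real \<Rightarrow> real \<Rightarrow> phase_fun" where
  "H_na n k0 k1 k2 r ph pr pph = complex_of_real (
     1/2 * r powr (2*n) * (pr^2 + pph^2 / r^2) + k0 / r powr (2*(n-1))
     + 1 / r powr (n-1) * (k1 * cos ((n-1)*ph) + k2 * sin ((n-1)*ph)))"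

definition M_n1 :: "real \<Rightarrow> real \<Rightarrow> real \<Rightarrow> real \<Rightarrow> real \<Rightarrow> real \<Rightarrow> real \<Rightarrow> real \<Rightarrow> real" where
  "M_n1 n k0 k1 k2 r ph pr pph =
     r powr (2*(n-1)) * (r^2 * pr^2 - pph^2) + 2*k0 / r powr (2*(n-1))
     + 2 / r powr (n-1) * (k1 * cos ((n-1)*ph) + k2 * sin ((n-1)*ph))"

definition M_n2 :: "real \<Rightarrow> real \<Rightarrow> real \<Rightarrow> real \<Rightarrow> real \<Rightarrow> real \<Rightarrow> real \<Rightarrow> real \<Rightarrow> real" where
  "M_n2 n k0 k1 k2 r ph pr pph =
     2 * r powr (2*n - 1) * pr * pph
     + 2 / r powr (n-1) * (k1 * sin ((n-1)*ph) - k2 * cos ((n-1)*ph))"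

definition M_n :: "real \<Rightarrow> real \<Rightarrow> real \<Rightarrow> real \<Rightarrow> phase_fun" where
  "M_n n k0 k1 k2 r ph pr pph =
     Complex (M_n1 n k0 k1 k2 r ph pr pph) (M_n2 n k0 k1 k2 r ph pr pph)"

definition N_phi :: "real \<Rightarrow> phase_fun" where
  "N_phi n r ph pr pph = Complex (cos (2*(n-1)*ph)) (sin (2*(n-1)*ph))"

definition J23 :: "real \<Rightarrow> real \<Rightarrow> real \<Rightarrow> real \<Rightarrow> phase_fun" where
  "J23 n k0 k1 k2 r ph pr pph = M_n n k0 k1 k2 r ph pr pph * cnj (N_phi n r ph pr pph)"

end

theory Submission
  imports Defs
begin

text \<open>
  Write \<open>a = n - 1\<close> and \<open>q = r powr a\<close>. Along the flow of \<open>H_na\<close> the functions \<open>M_n\<close> and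
  \<open>N_phi\<close> rotate at the same rate: \<open>{M_n, H_na} = 2 i a q\<^sup>2 p_phi M_n\<close>, and since
  \<open>cnj N_phi = cis (-2 a phi)\<close> depends on \<open>phi\<close> alone,
  \<open>{cnj N_phi, H_na} = -2 i a q\<^sup>2 p_phi cnj N_phi\<close>. The Leibniz rule for the bracket then
  makes \<open>J23 = M_n cnj N_phi\<close> a constant of motion. In terms of \<open>q\<close> both \<open>H_na\<close> and \<open>M_n\<close> are
  rational in \<open>q, r, p_r, p_phi\<close> and the trigonometric terms, and \<open>dq/dr = a q / r\<close> turns the
  first bracket into a rational identity.
\<close>

definition phase_differentiable :: "phase_fun \<Rightarrow> real \<Rightarrow> real \<Rightarrow> real \<Rightarrow> real \<Rightarrow> bool" where
  "phase_differentiable F r ph pr pph \<longleftrightarrow>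
     (\<lambda>t. F t ph pr pph) differentiable at r \<and> (\<lambda>t. F r t pr pph) differentiable at ph \<and>
     (\<lambda>t. F r ph t pph) differentiable at pr \<and> (\<lambda>t. F r ph pr t) differentiable at pph"

lemma poisson_mult_left:
  assumes "phase_differentiable F r ph pr pph" and "phase_differentiable G r ph pr pph"
  shows "poisson (\<lambda>r ph pr pph. F r ph pr pph * G r ph pr pph) H r ph pr pph =
           poisson F H r ph pr pph * G r ph pr pph + F r ph pr pph * poisson G H r ph pr pph"
  using assms unfolding phase_differentiable_def poisson_def d_r_def d_phi_def d_pr_def d_pphi_def
  by (simp add: algebra_simps)

lemma phase_differentiable_angle_function:
  "f differentiable at ph \<Longrightarrow> phase_differentiable (\<lambda>r ph pr pph. f ph) r ph pr pph"
  by (simp add: phase_differentiable_def)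

lemma poisson_angle_function:
  assumes "(f has_vector_derivative f') (at ph)"
  shows "poisson (\<lambda>r ph pr pph. f ph) H r ph pr pph = f' * d_pphi H r ph pr pph"
  using vector_derivative_at[OF assms]
  by (simp add: poisson_def d_r_def d_phi_def d_pr_def d_pphi_def)

lemma has_vector_derivative_Complex:
  assumes "(f has_real_derivative f') (at x)" and "(g has_real_derivative g') (at x)"
  shows "((\<lambda>t. Complex (f t) (g t)) has_vector_derivative Complex f' g') (at x)"
  unfolding Complex_eq by (intro derivative_intros has_vector_derivative_of_real assms)

lemma has_vector_derivative_cis_linear:
  "((\<lambda>t. cis (c * t)) has_vector_derivative \<i> * c * cis (c * x)) (at x)"
  unfolding has_vector_derivative_def
  by (auto intro!: derivative_eq_intros simp: algebra_simps scaleR_conv_of_real)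

lemma powr_double: "(r::real) > 0 \<Longrightarrow> r powr (2 * x) = (r powr x)^2"
  by (simp add: powr_power mult.commute)

lemma has_real_derivative_powr_div:
  "(r::real) > 0 \<Longrightarrow> ((\<lambda>t. t powr a) has_real_derivative a * r powr a / r) (at r)"
  using has_real_derivative_powr[of r a] unfolding powr_diff[of r a 1] by (simp del: powr_diff)

context
  fixes n k0 k1 k2 :: real
begin

lemma M_n1_rescaled:
  assumes "r > 0"
  shows "M_n1 n k0 k1 k2 r ph pr pph = (r powr (n - 1))^2 * (r^2 * pr^2 - pph^2)
     + 2 * k0 / (r powr (n - 1))^2 + 2 * (k1 * cos ((n - 1) * ph) + k2 * sin ((n - 1) * ph)) / r powr (n - 1)"
  unfolding M_n1_def powr_double[OF assms] by simp

lemma M_n2_rescaled: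
  assumes "r > 0"
  shows "M_n2 n k0 k1 k2 r ph pr pph = 2 * (r powr (n - 1))^2 * r * pr * pph
     + 2 * (k1 * sin ((n - 1) * ph) - k2 * cos ((n - 1) * ph)) / r powr (n - 1)"
proof -
  have "r powr (2 * n - 1) = (r powr (n - 1))^2 * r"
    using assms powr_double[of r "n - 1"] powr_add[of r "2 * (n - 1)" 1] by (simp add: algebra_simps)
  then show ?thesis by (simp add: M_n2_def)
qed

lemma H_na_rescaled:
  assumes "r > 0"
  shows "H_na n k0 k1 k2 r ph pr pph = of_real ((r powr (n - 1))^2 * (r^2 * pr^2 + pph^2) / 2
     + k0 / (r powr (n - 1))^2 + (k1 * cos ((n - 1) * ph) + k2 * sin ((n - 1) * ph)) / r powr (n - 1))"
proof -
  have "r powr (2 * n) = (r powr (n - 1))^2 * r^2"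
    using assms powr_double[of r "n - 1"] powr_add[of r "2 * (n - 1)" 2] by (simp add: algebra_simps)
  then show ?thesis
    unfolding H_na_def powr_double[OF assms] using assms by (simp add: field_simps)
qed

lemma H_na_partial_derivatives:
  fixes r ph pr pph :: real
  assumes r: "r > 0"
  defines "a \<equiv> n - 1" defines "q \<equiv> r powr a"
  defines "V \<equiv> k1 * cos (a * ph) + k2 * sin (a * ph)" and "W \<equiv> k1 * sin (a * ph) - k2 * cos (a * ph)"
  shows "d_r (H_na n k0 k1 k2) r ph pr pph = of_real (a * q^2 * (r^2 * pr^2 + pph^2) / r
           + q^2 * r * pr^2 - 2 * a * k0 / (q^2 * r) - a * V / (q * r))" (is "_ = of_real ?H_r")
    and "d_phi (H_na n k0 k1 k2) r ph pr pph = of_real (- a * W / q)"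
    and "d_pr (H_na n k0 k1 k2) r ph pr pph = of_real (q^2 * r^2 * pr)"
    and "d_pphi (H_na n k0 k1 k2) r ph pr pph = of_real (q^2 * pph)"
proof -
  \<comment> \<open>Hiding \<open>t powr a\<close> behind \<open>w\<close> keeps the simplifier from splitting the exponent.\<close>
  define w where "w t = t powr a" for t
  have dw: "(w has_real_derivative a * w r / r) (at r)"
    unfolding w_def[abs_def] using r by (rule has_real_derivative_powr_div)
  have "w r > 0" using r by (simp add: w_def)
  have "((\<lambda>t. (w t)^2 * (t^2 * pr^2 + pph^2) / 2 + k0 / (w t)^2 + V / w t) has_real_derivative ?H_r) (at r)"
    using \<open>w r > 0\<close> r unfolding q_def w_def[symmetric]
    by (auto intro!: derivative_eq_intros dw simp: field_simps power2_eq_square power3_eq_cube)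
  then have "((\<lambda>t. H_na n k0 k1 k2 t ph pr pph) has_vector_derivative of_real ?H_r) (at r)"
    by (rule has_vector_derivative_transform_within_open[OF has_vector_derivative_of_real, of _ _ _ "{0<..}"])
      (use r in \<open>auto simp: H_na_rescaled w_def V_def a_def\<close>)
  then show "d_r (H_na n k0 k1 k2) r ph pr pph = of_real ?H_r"
    unfolding d_r_def by (rule vector_derivative_at)
  show "d_phi (H_na n k0 k1 k2) r ph pr pph = of_real (- a * W / q)"
    unfolding d_phi_def H_na_rescaled[OF r] using r unfolding a_def q_def W_def
    by (intro vector_derivative_at has_vector_derivative_of_real)
      (auto intro!: derivative_eq_intros simp: field_simps)
  show "d_pr (H_na n k0 k1 k2) r ph pr pph = of_real (q^2 * r^2 * pr)"
    unfolding d_pr_def H_na_rescaled[OF r] unfolding q_def a_def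
    by (intro vector_derivative_at has_vector_derivative_of_real) (auto intro!: derivative_eq_intros)
  show "d_pphi (H_na n k0 k1 k2) r ph pr pph = of_real (q^2 * pph)"
    unfolding d_pphi_def H_na_rescaled[OF r] unfolding q_def a_def
    by (intro vector_derivative_at has_vector_derivative_of_real) (auto intro!: derivative_eq_intros)
qed

lemma M_n_partial_derivatives:
  fixes r ph pr pph :: real
  assumes r: "r > 0"
  defines "a \<equiv> n - 1" defines "q \<equiv> r powr a"
  defines "V \<equiv> k1 * cos (a * ph) + k2 * sin (a * ph)" and "W \<equiv> k1 * sin (a * ph) - k2 * cos (a * ph)"
  shows "((\<lambda>t. M_n n k0 k1 k2 t ph pr pph) has_vector_derivative
           Complex (2 * a * q^2 * (r^2 * pr^2 - pph^2) / r + 2 * q^2 * r * pr^2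
                      - 4 * a * k0 / (q^2 * r) - 2 * a * V / (q * r))
                   (2 * (2 * a + 1) * q^2 * pr * pph - 2 * a * W / (q * r))) (at r)"
      (is "(_ has_vector_derivative ?M_r) _")
    and "((\<lambda>t. M_n n k0 k1 k2 r t pr pph) has_vector_derivative
           Complex (- 2 * a * W / q) (2 * a * V / q)) (at ph)"
    and "((\<lambda>t. M_n n k0 k1 k2 r ph t pph) has_vector_derivative
           Complex (2 * q^2 * r^2 * pr) (2 * q^2 * r * pph)) (at pr)"
    and "((\<lambda>t. M_n n k0 k1 k2 r ph pr t) has_vector_derivative
           Complex (- 2 * q^2 * pph) (2 * q^2 * r * pr)) (at pph)"
proof -
  define w where "w t = t powr a" for t
  have dw: "(w has_real_derivative a * w r / r) (at r)"
    unfolding w_def[abs_def] using r by (rule has_real_derivative_powr_div)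
  have "w r > 0" using r by (simp add: w_def)
  have "((\<lambda>t. Complex ((w t)^2 * (t^2 * pr^2 - pph^2) + 2 * k0 / (w t)^2 + 2 * V / w t)
                      (2 * (w t)^2 * t * pr * pph + 2 * W / w t)) has_vector_derivative ?M_r) (at r)"
    using \<open>w r > 0\<close> r unfolding q_def w_def[symmetric]
    by (intro has_vector_derivative_Complex)
      (auto intro!: derivative_eq_intros dw simp: field_simps power2_eq_square power3_eq_cube)
  then show "((\<lambda>t. M_n n k0 k1 k2 t ph pr pph) has_vector_derivative ?M_r) (at r)"
    by (rule has_vector_derivative_transform_within_open[of _ _ _ "{0<..}"])
      (use r in \<open>auto simp: M_n_def M_n1_rescaled M_n2_rescaled w_def V_def W_def a_def\<close>)
  show "((\<lambda>t. M_n n k0 k1 k2 r t pr pph) has_vector_derivative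
           Complex (- 2 * a * W / q) (2 * a * V / q)) (at ph)"
    unfolding M_n_def M_n1_rescaled[OF r] M_n2_rescaled[OF r] using r unfolding a_def q_def V_def W_def
    by (intro has_vector_derivative_Complex) (auto intro!: derivative_eq_intros simp: field_simps)
  show "((\<lambda>t. M_n n k0 k1 k2 r ph t pph) has_vector_derivative
           Complex (2 * q^2 * r^2 * pr) (2 * q^2 * r * pph)) (at pr)"
    unfolding M_n_def M_n1_rescaled[OF r] M_n2_rescaled[OF r] unfolding q_def a_def
    by (intro has_vector_derivative_Complex) (auto intro!: derivative_eq_intros)
  show "((\<lambda>t. M_n n k0 k1 k2 r ph pr t) has_vector_derivative
           Complex (- 2 * q^2 * pph) (2 * q^2 * r * pr)) (at pph)"
    unfolding M_n_def M_n1_rescaled[OF r] M_n2_rescaled[OF r] unfolding q_def a_def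
    by (intro has_vector_derivative_Complex) (auto intro!: derivative_eq_intros)
qed

lemma phase_differentiable_M_n:
  "r > 0 \<Longrightarrow> phase_differentiable (M_n n k0 k1 k2) r ph pr pph"
  unfolding phase_differentiable_def by (metis M_n_partial_derivatives differentiableI_vector)

lemma poisson_M_n_H_na:
  fixes r ph pr pph :: real
  assumes r: "r > 0"
  defines "a \<equiv> n - 1" defines "q \<equiv> r powr a"
  shows "poisson (M_n n k0 k1 k2) (H_na n k0 k1 k2) r ph pr pph =
           2 * \<i> * a * q^2 * pph * M_n n k0 k1 k2 r ph pr pph"
proof -
  have "q > 0" using r by (simp add: q_def)
  have M_n_eq: "M_n n k0 k1 k2 r ph pr pph =
      Complex (q^2 * (r^2 * pr^2 - pph^2) + 2 * k0 / q^2 + 2 * (k1 * cos (a * ph) + k2 * sin (a * ph)) / q)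
              (2 * q^2 * r * pr * pph + 2 * (k1 * sin (a * ph) - k2 * cos (a * ph)) / q)"
    using r by (simp add: M_n_def M_n1_rescaled M_n2_rescaled q_def a_def)
  note d_M_n = M_n_partial_derivatives[OF r, THEN vector_derivative_at,
      folded a_def q_def d_r_def d_phi_def d_pr_def d_pphi_def]
  note d_H_na = H_na_partial_derivatives[OF r, folded a_def q_def]
  show ?thesis
    unfolding poisson_def d_M_n d_H_na M_n_eq using r \<open>q > 0\<close>
    by (simp add: complex_eq_iff field_simps power2_eq_square power3_eq_cube)
qed

end

theorem proposition1:
  fixes n k0 k1 k2 :: real
  assumes "n \<noteq> 1"
  shows "\<forall>r ph pr pph. r > 0 \<longrightarrow>
           poisson (J23 n k0 k1 k2) (H_na n k0 k1 k2) r ph pr pph = 0"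
proof (intro allI impI)
  fix r ph pr pph :: real
  assume r: "r > 0"
  define c where "c = 2 * (n - 1)"
  have "N_phi n r ph pr pph = cis (c * ph)" for r ph pr pph
    by (simp add: N_phi_def c_def complex_eq_iff)
  then have J23_eq: "J23 n k0 k1 k2 = (\<lambda>r ph pr pph. M_n n k0 k1 k2 r ph pr pph * cis (- c * ph))"
    by (simp add: fun_eq_iff J23_def cis_cnj)
  note d_cis = has_vector_derivative_cis_linear[of "- c" ph]
  have "poisson (J23 n k0 k1 k2) (H_na n k0 k1 k2) r ph pr pph =
          poisson (M_n n k0 k1 k2) (H_na n k0 k1 k2) r ph pr pph * cis (- c * ph)
          + M_n n k0 k1 k2 r ph pr pph * poisson (\<lambda>r ph pr pph. cis (- c * ph)) (H_na n k0 k1 k2) r ph pr pph"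
    unfolding J23_eq
    by (rule poisson_mult_left[OF phase_differentiable_M_n[OF r]
          phase_differentiable_angle_function[OF differentiableI_vector[OF d_cis]]])
  also have "\<dots> = 0"
    unfolding poisson_M_n_H_na[OF r] poisson_angle_function[OF d_cis] H_na_partial_derivatives(4)[OF r]
    by (simp add: c_def algebra_simps)
  finally show "poisson (J23 n k0 k1 k2) (H_na n k0 k1 k2) r ph pr pph = 0" .
qed

end
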